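(* Let $G$ be a bipartite permutation graph with a transitive vertex ordering $<$, and let $M$ be a uniquely restricted matching in $G$ starting with $e'\in E(G)$. Let $e\in E(G)$ be such that $l(e)<l(e')$ and $\{e,e'\}$ is a uniquely restricted matching in $G$. Then $\{e\}\cup M$ is a uniquely restricted matching in $G$ starting with $e$.
   Context: Graphs are finite, simple, undirected. A permutation graph is a graph isomorphic to some $G_\pi$, where for a permutation $\pi$ of $\{1,\dots,n\}$, $G_\pi$ has vertex set $\{1,\dots,n\}$ and edges $ij$ with $(i-j)(\pi(i)-\pi(j))<0$; a bipartite permutation graph is a permutation graph that is bipartite. An ordering $<$ of $V(G)$ is a transitive vertex ordering if for all $u<v<w$: (a) $uv,vw\in E(G)$ implies $uw\in E(G)$, and (b) $uw\in E(G)$ implies $uv\in E(G)$ or $vw\in E(G)$. For an edge $e=uv$, $l(e)=\min_<\{u,v\}$ and $r(e)=\max_<\{u,v\}$. A matching is a set of pairwise vertex-disjoint edges; it is uniquely restricted if no other matching of $G$ matches exactly the same vertex set. A matching $M$ whose edges are labelled $e_1,\dots,e_{|M|}$ with $l(e_1)<l(e_2)<\cdots<l(e_{|M|})$ is said to start with $e_1$. *)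

theory Defs
  imports Main
begin

definition simple_graph :: "'a set \<Rightarrow> 'a set set \<Rightarrow> bool" where
  "simple_graph V E \<longleftrightarrow> finite V \<and>
     (\<forall>e\<in>E. \<exists>u v. e = {u, v} \<and> u \<in> V \<and> v \<in> V \<and> u \<noteq> v)"

definition perm_graph_edges :: "nat \<Rightarrow> (nat \<Rightarrow> nat) \<Rightarrow> nat set set" where
  "perm_graph_edges n \<pi> = {{i, j} | i j. i \<in> {1..n} \<and> j \<in> {1..n} \<and>
      (int i - int j) * (int (\<pi> i) - int (\<pi> j)) < 0}"

definition permutation_graph :: "'a set \<Rightarrow> 'a set set \<Rightarrow> bool" where
  "permutation_graph V E \<longleftrightarrow>
     (\<exists>n \<pi> f. bij_betw \<pi> {1..n} {1..n} \<and> bij_betw f V {1..n} \<and>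
        (\<forall>u\<in>V. \<forall>v\<in>V. {u, v} \<in> E \<longleftrightarrow> {f u, f v} \<in> perm_graph_edges n \<pi>))"

definition bipartite :: "'a set \<Rightarrow> 'a set set \<Rightarrow> bool" where
  "bipartite V E \<longleftrightarrow> (\<exists>A. A \<subseteq> V \<and> (\<forall>e\<in>E. card (e \<inter> A) = 1))"

definition bipartite_permutation_graph :: "'a set \<Rightarrow> 'a set set \<Rightarrow> bool" where
  "bipartite_permutation_graph V E \<longleftrightarrow> permutation_graph V E \<and> bipartite V E"

text \<open>A transitive vertex ordering: R is a strict linear order on V (pairs (u,v) mean u < v)
  satisfying conditions (a) and (b).\<close>
definition transitive_vertex_ordering :: "'a set \<Rightarrow> 'a set set \<Rightarrow> ('a \<times> 'a) set \<Rightarrow> bool" where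
  "transitive_vertex_ordering V E R \<longleftrightarrow>
     R \<subseteq> V \<times> V \<and> strict_linear_order_on V R \<and>
     (\<forall>u\<in>V. \<forall>v\<in>V. \<forall>w\<in>V. (u, v) \<in> R \<and> (v, w) \<in> R \<longrightarrow>
        ({u, v} \<in> E \<and> {v, w} \<in> E \<longrightarrow> {u, w} \<in> E) \<and>
        ({u, w} \<in> E \<longrightarrow> {u, v} \<in> E \<or> {v, w} \<in> E))"

definition lft :: "('a \<times> 'a) set \<Rightarrow> 'a set \<Rightarrow> 'a" where
  "lft R e = (THE u. u \<in> e \<and> (\<forall>w\<in>e. w \<noteq> u \<longrightarrow> (u, w) \<in> R))"

definition matching :: "'a set set \<Rightarrow> 'a set set \<Rightarrow> bool" where
  "matching E M \<longleftrightarrow> M \<subseteq> E \<and> (\<forall>e\<in>M. \<forall>f\<in>M. e \<noteq> f \<longrightarrow> e \<inter> f = {})"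

definition uniquely_restricted_matching :: "'a set set \<Rightarrow> 'a set set \<Rightarrow> bool" where
  "uniquely_restricted_matching E M \<longleftrightarrow> matching E M \<and>
     (\<forall>M'. matching E M' \<and> \<Union>M' = \<Union>M \<longrightarrow> M' = M)"

definition starts_with :: "('a \<times> 'a) set \<Rightarrow> 'a set set \<Rightarrow> 'a set \<Rightarrow> bool" where
  "starts_with R M e \<longleftrightarrow> e \<in> M \<and> (\<forall>f\<in>M. f \<noteq> e \<longrightarrow> (lft R e, lft R f) \<in> R)"

end

theory Submission
  imports Defs
begin

text \<open>In a triangle-free graph with a transitive vertex ordering, a matching is uniquely
  restricted iff no two of its edges \<open>u < v\<close>, \<open>x < y\<close> cross, i.e. have both \<open>uy\<close> and
  \<open>xv\<close> as edges: a second matching on the same vertices must, by induction on the size, use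
  the same edge at the least matched vertex, since otherwise conditions (a) and (b) produce a
  crossing. Because \<open>e\<close> starts before every edge of \<open>M\<close>, the same conditions show that an
  edge of \<open>M\<close> meeting or crossing \<open>e\<close> would force \<open>e\<close> to meet or cross \<open>e'\<close>, or that edge
  to cross \<open>e'\<close>.\<close>

lemma matchingI:
  "N \<subseteq> E \<Longrightarrow> (\<And>f g. f \<in> N \<Longrightarrow> g \<in> N \<Longrightarrow> f \<noteq> g \<Longrightarrow> f \<inter> g = {}) \<Longrightarrow> matching E N"
  unfolding matching_def by simp

lemma matching_edges: "matching E N \<Longrightarrow> N \<subseteq> E"
  unfolding matching_def by simp

lemma matching_disjoint: "matching E N \<Longrightarrow> f \<in> N \<Longrightarrow> g \<in> N \<Longrightarrow> f \<noteq> g \<Longrightarrow> f \<inter> g = {}"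
  unfolding matching_def by simp

lemma matching_subset:
  assumes "matching E N" "N' \<subseteq> N"
  shows "matching E N'"
  using assms matching_edges matching_disjoint by (intro matchingI) blast+

lemma matching_insert:
  assumes "matching E M" "e \<in> E" "\<And>f. f \<in> M \<Longrightarrow> f \<inter> e = {}"
  shows "matching E (insert e M)"
proof (rule matchingI)
  show "insert e M \<subseteq> E"
    using matching_edges[OF assms(1)] assms(2) by blast
next
  fix f g
  assume "f \<in> insert e M" "g \<in> insert e M" "f \<noteq> g"
  then consider "f \<in> M" "g \<in> M" | "f = e" "g \<in> M" | "g = e" "f \<in> M"
    by blast
  then show "f \<inter> g = {}"
  proof cases
    case 1
    then show ?thesis
      using matching_disjoint[OF assms(1) _ _ \<open>f \<noteq> g\<close>] by blast
  next
    case 2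
    then show ?thesis
      using assms(3)[of g] by blast
  next
    case 3
    then show ?thesis
      using assms(3)[of f] by blast
  qed
qed

lemma matching_disjoint_diff:
  assumes "matching E N" "D \<subseteq> N" "h \<in> N - D"
  shows "h \<inter> \<Union>D = {}"
proof -
  have "h \<inter> d = {}" if "d \<in> D" for d
    using assms(2,3) that by (intro matching_disjoint[OF assms(1)]) auto
  then show ?thesis
    by blast
qed

lemma Union_diff_matching:
  assumes "matching E N" "D \<subseteq> N"
  shows "\<Union>(N - D) = \<Union>N - \<Union>D"
  using matching_disjoint_diff[OF assms] by blast

lemma matching_exchange:
  assumes "matching E N" "D \<subseteq> N" "matching E G" "\<Union>G \<subseteq> \<Union>D"
  shows "matching E (N - D \<union> G)"
proof (rule matchingI)
  show "N - D \<union> G \<subseteq> E"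
    using matching_edges assms(1,3) by blast
next
  fix f g
  assume "f \<in> N - D \<union> G" "g \<in> N - D \<union> G" "f \<noteq> g"
  then consider "f \<in> N - D" "g \<in> N - D" | "f \<in> G" "g \<in> G" | "f \<in> N - D" "g \<in> G"
    | "g \<in> N - D" "f \<in> G"
    by blast
  then show "f \<inter> g = {}"
  proof cases
    case 1
    then show ?thesis
      using matching_disjoint[OF assms(1) _ _ \<open>f \<noteq> g\<close>] by blast
  next
    case 2
    then show ?thesis
      using matching_disjoint[OF assms(3) _ _ \<open>f \<noteq> g\<close>] by blast
  next
    case 3
    then show ?thesis
      using matching_disjoint_diff[OF assms(1,2), of f] assms(4) by blast
  next
    case 4
    then show ?thesis
      using matching_disjoint_diff[OF assms(1,2), of g] assms(4) by blast
  qed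
qed

lemma simple_graph_edge:
  assumes "simple_graph V E" "{u, v} \<in> E"
  shows "u \<in> V \<and> v \<in> V \<and> u \<noteq> v"
  using assms unfolding simple_graph_def by (metis doubleton_eq_iff)

lemma bipartite_triangle_free:
  assumes "simple_graph V E" "bipartite V E" "{u, v} \<in> E" "{v, w} \<in> E" "{u, w} \<in> E"
  shows False
proof -
  obtain A where "\<forall>f\<in>E. card (f \<inter> A) = 1"
    using assms(2) unfolding bipartite_def by blast
  then have "card ({u, v} \<inter> A) = 1" "card ({v, w} \<inter> A) = 1" "card ({u, w} \<inter> A) = 1"
    using assms(3-5) by auto
  moreover have "u \<noteq> v" "v \<noteq> w" "u \<noteq> w"
    using simple_graph_edge[OF assms(1)] assms(3-5) by blast+
  ultimately show False
    by (cases "u \<in> A"; cases "v \<in> A"; cases "w \<in> A") auto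
qed

lemma uniquely_restricted_no_alternating_square:
  assumes "simple_graph V E" "uniquely_restricted_matching E N"
    and "{u, v} \<in> N" "{x, y} \<in> N" "{u, v} \<noteq> {x, y}" "{u, y} \<in> E" "{x, v} \<in> E"
  shows False
proof -
  have N: "matching E N" and unique: "\<And>N'. matching E N' \<Longrightarrow> \<Union>N' = \<Union>N \<Longrightarrow> N' = N"
    using assms(2) unfolding uniquely_restricted_matching_def by auto
  have disj: "{u, v} \<inter> {x, y} = {}"
    using matching_disjoint[OF N assms(3-5)] .
  moreover have "u \<noteq> v" "x \<noteq> y"
    using simple_graph_edge[OF assms(1)] matching_edges[OF N] assms(3,4) by blast+
  ultimately have swapped: "matching E {{u, y}, {x, v}}"
    using assms(6,7) by (intro matchingI) auto
  have "matching E (N - {{u, v}, {x, y}} \<union> {{u, y}, {x, v}})"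
    by (rule matching_exchange[OF N _ swapped]) (use assms(3,4) in auto)
  moreover have "\<Union>(N - {{u, v}, {x, y}} \<union> {{u, y}, {x, v}}) = \<Union>N"
    using Union_diff_matching[OF N, of "{{u, v}, {x, y}}"] assms(3,4) by auto
  ultimately have "{u, y} \<in> N"
    using unique by blast
  moreover have "{u, y} \<noteq> {u, v}"
    using disj by auto
  ultimately have "{u, y} \<inter> {u, v} = {}"
    by (rule matching_disjoint[OF N _ assms(3)])
  then show False
    by blast
qed

lemma starts_with_member: "starts_with R M e \<Longrightarrow> e \<in> M"
  unfolding starts_with_def by simp

lemma starts_withD: "starts_with R M e \<Longrightarrow> f \<in> M \<Longrightarrow> f \<noteq> e \<Longrightarrow> (lft R e, lft R f) \<in> R"
  unfolding starts_with_def by simp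

lemma starts_with_insert:
  assumes "trans R" "starts_with R M e'" "(lft R e, lft R e') \<in> R"
  shows "starts_with R (insert e M) e"
  unfolding starts_with_def
proof (intro conjI ballI impI)
  fix f
  assume "f \<in> insert e M" "f \<noteq> e"
  then have "f \<in> M"
    by simp
  show "(lft R e, lft R f) \<in> R"
  proof (cases "f = e'")
    case True
    then show ?thesis
      using assms(3) by simp
  next
    case False
    show ?thesis
      using transD[OF assms(1,3) starts_withD[OF assms(2) \<open>f \<in> M\<close> False]] .
  qed
qed simp

locale triangle_free_ordered_graph =
  fixes V :: "'a set" and E :: "'a set set" and R :: "('a \<times> 'a) set"
  assumes simple: "simple_graph V E"
    and ordering: "transitive_vertex_ordering V E R"
    and triangle_free: "\<And>u v w. {u, v} \<in> E \<Longrightarrow> {v, w} \<in> E \<Longrightarrow> {u, w} \<in> E \<Longrightarrow> False"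
begin

abbreviation precedes :: "'a \<Rightarrow> 'a \<Rightarrow> bool" (infix "\<prec>" 50) where
  "u \<prec> v \<equiv> (u, v) \<in> R"

lemma edge_doubleton: "f \<in> E \<Longrightarrow> \<exists>u v. f = {u, v} \<and> u \<in> V \<and> v \<in> V \<and> u \<noteq> v"
  using simple unfolding simple_graph_def by blast

lemmas edge_vertices = simple_graph_edge[OF simple]

lemma finite_edges: "finite E"
  using simple finite_subset[of E "Pow V"] edge_doubleton unfolding simple_graph_def by blast

lemma prec_in_V: "u \<prec> v \<Longrightarrow> u \<in> V \<and> v \<in> V"
  using ordering unfolding transitive_vertex_ordering_def by blast

lemma prec_trans: "u \<prec> v \<Longrightarrow> v \<prec> w \<Longrightarrow> u \<prec> w"
  using ordering unfolding transitive_vertex_ordering_def strict_linear_order_on_def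
  by (meson transE)

lemma prec_irrefl: "\<not> u \<prec> u"
  using ordering unfolding transitive_vertex_ordering_def strict_linear_order_on_def
  by (simp add: irrefl_def)

lemma prec_asym: "u \<prec> v \<Longrightarrow> \<not> v \<prec> u"
  using prec_trans prec_irrefl by blast

lemma prec_linear: "u \<in> V \<Longrightarrow> v \<in> V \<Longrightarrow> u \<noteq> v \<Longrightarrow> u \<prec> v \<or> v \<prec> u"
  using ordering unfolding transitive_vertex_ordering_def strict_linear_order_on_def total_on_def
  by blast

lemma edge_transitive: "u \<prec> v \<Longrightarrow> v \<prec> w \<Longrightarrow> {u, v} \<in> E \<Longrightarrow> {v, w} \<in> E \<Longrightarrow> {u, w} \<in> E"
  using ordering prec_in_V unfolding transitive_vertex_ordering_def by blast

lemma edge_split: "u \<prec> v \<Longrightarrow> v \<prec> w \<Longrightarrow> {u, w} \<in> E \<Longrightarrow> {u, v} \<in> E \<or> {v, w} \<in> E"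
  using ordering prec_in_V unfolding transitive_vertex_ordering_def by blast

lemma no_increasing_path: "u \<prec> v \<Longrightarrow> v \<prec> w \<Longrightarrow> {u, v} \<in> E \<Longrightarrow> {v, w} \<in> E \<Longrightarrow> False"
  using edge_transitive triangle_free by blast

lemma edge_split_right:
  "u \<prec> v \<Longrightarrow> v \<prec> w \<Longrightarrow> {u, w} \<in> E \<Longrightarrow> v \<prec> t \<Longrightarrow> {v, t} \<in> E \<Longrightarrow> {v, w} \<in> E"
  using edge_split no_increasing_path by blast

lemma edge_split_left:
  "u \<prec> v \<Longrightarrow> v \<prec> w \<Longrightarrow> {u, w} \<in> E \<Longrightarrow> t \<prec> v \<Longrightarrow> {t, v} \<in> E \<Longrightarrow> {u, v} \<in> E"
  using edge_split no_increasing_path by blast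

lemma edge_from_right_end: "a \<prec> b \<Longrightarrow> {a, b} \<in> E \<Longrightarrow> {b, y} \<in> E \<Longrightarrow> y \<prec> b"
  using edge_vertices prec_linear no_increasing_path by metis

lemma nested_edges_cross:
  "c \<prec> p \<Longrightarrow> p \<prec> q \<Longrightarrow> q \<prec> d \<Longrightarrow> {c, d} \<in> E \<Longrightarrow> {p, q} \<in> E \<Longrightarrow> {c, q} \<in> E \<and> {p, d} \<in> E"
  using edge_split_left edge_split_right prec_trans by meson

lemma edge_oriented: "f \<in> E \<Longrightarrow> \<exists>u v. f = {u, v} \<and> u \<prec> v"
  using edge_doubleton prec_linear by (metis insert_commute)

lemma edge_through: "f \<in> E \<Longrightarrow> a \<in> f \<Longrightarrow> \<exists>b. f = {a, b} \<and> a \<noteq> b"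
  using edge_doubleton by (metis insert_commute insertE singletonD)

lemma lft_oriented: "u \<prec> v \<Longrightarrow> lft R {u, v} = u"
  unfolding lft_def by (rule the_equality) (use prec_irrefl prec_asym in auto)

lemma oriented_doubleton_eq: "{u, v} = {x, y} \<Longrightarrow> u \<prec> v \<Longrightarrow> x \<prec> y \<Longrightarrow> u = x \<and> v = y"
  using prec_asym by (auto simp: doubleton_eq_iff)

lemma least_vertex:
  assumes "S \<subseteq> V" "S \<noteq> {}"
  obtains a where "a \<in> S" "\<And>s. s \<in> S \<Longrightarrow> s \<noteq> a \<Longrightarrow> a \<prec> s"
proof -
  have "finite R"
    using ordering simple finite_subset[of R "V \<times> V"]
    unfolding transitive_vertex_ordering_def simple_graph_def by blast
  moreover have "acyclic R"
    using ordering unfolding transitive_vertex_ordering_def strict_linear_order_on_def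
    by (simp add: acyclic_irrefl)
  ultimately have "wf R"
    by (rule finite_acyclic_wf)
  then obtain a where "a \<in> S" "\<And>s. s \<prec> a \<Longrightarrow> s \<notin> S"
    using assms(2) wfE_min' by blast
  then show thesis
    using that assms(1) prec_linear by blast
qed

definition cross_free :: "'a set set \<Rightarrow> bool" where
  "cross_free N \<longleftrightarrow> (\<nexists>u v x y. {u, v} \<in> N \<and> {x, y} \<in> N \<and> {u, v} \<noteq> {x, y} \<and>
     u \<prec> v \<and> x \<prec> y \<and> {u, y} \<in> E \<and> {x, v} \<in> E)"

lemma cross_freeI:
  assumes "\<And>u v x y. {u, v} \<in> N \<Longrightarrow> {x, y} \<in> N \<Longrightarrow> {u, v} \<noteq> {x, y} \<Longrightarrow>
      u \<prec> v \<Longrightarrow> x \<prec> y \<Longrightarrow> {u, y} \<in> E \<Longrightarrow> {x, v} \<in> E \<Longrightarrow> False"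
  shows "cross_free N"
  using assms unfolding cross_free_def by blast

lemma cross_freeD:
  assumes "cross_free N" "{u, v} \<in> N" "{x, y} \<in> N" "{u, v} \<noteq> {x, y}"
    "u \<prec> v" "x \<prec> y" "{u, y} \<in> E" "{x, v} \<in> E"
  shows False
  using assms unfolding cross_free_def by blast

lemma cross_free_subset: "cross_free N \<Longrightarrow> N' \<subseteq> N \<Longrightarrow> cross_free N'"
  by (rule cross_freeI) (use cross_freeD in blast)

lemma cross_free_insert:
  assumes "cross_free N" "a \<prec> b"
    and compatible: "\<And>p q. {p, q} \<in> N \<Longrightarrow> p \<prec> q \<Longrightarrow> \<not> ({a, q} \<in> E \<and> {p, b} \<in> E)"
  shows "cross_free (insert {a, b} N)"
proof (rule cross_freeI)
  fix u v x y
  assume uv: "{u, v} \<in> insert {a, b} N" "u \<prec> v" and xy: "{x, y} \<in> insert {a, b} N" "x \<prec> y"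
    and "{u, v} \<noteq> {x, y}" and cross: "{u, y} \<in> E" "{x, v} \<in> E"
  have u: "u = a \<and> v = b \<or> {u, v} \<in> N"
    using uv(1) oriented_doubleton_eq[OF _ uv(2) assms(2)] by auto
  have x: "x = a \<and> y = b \<or> {x, y} \<in> N"
    using xy(1) oriented_doubleton_eq[OF _ xy(2) assms(2)] by auto
  show False
  proof (cases "{u, v} \<in> N")
    case uvN: True
    show False
    proof (cases "{x, y} \<in> N")
      case True
      then show False
        using cross_freeD[OF assms(1) uvN _ \<open>{u, v} \<noteq> {x, y}\<close> uv(2) xy(2) cross] by blast
    next
      case False
      then show False
        using x compatible[OF uvN uv(2)] cross by (simp add: insert_commute)
    qed
  next
    case False
    then have "u = a" "v = b" "{x, y} \<in> N"
      using u x \<open>{u, v} \<noteq> {x, y}\<close> by auto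
    then show False
      using compatible[OF _ xy(2)] cross by simp
  qed
qed

lemma uniquely_restricted_cross_free: "uniquely_restricted_matching E N \<Longrightarrow> cross_free N"
  using uniquely_restricted_no_alternating_square[OF simple] by (intro cross_freeI) blast

lemma least_vertex_same_partner:
  assumes N: "matching E N" "cross_free N" and N': "matching E N'" "\<Union>N' = \<Union>N"
    and least: "\<And>s. s \<in> \<Union>N \<Longrightarrow> s \<noteq> a \<Longrightarrow> a \<prec> s"
    and ab: "{a, b} \<in> N" and ax: "{a, x} \<in> N'"
    and smaller: "\<And>N''. matching E N'' \<Longrightarrow> \<Union>N'' = \<Union>N - {a, b} \<Longrightarrow> N'' = N - {{a, b}}"
  shows "x = b"
proof (rule ccontr)
  assume "x \<noteq> b"
  have "N \<subseteq> E" "N' \<subseteq> E"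
    using matching_edges N(1) N'(1) by auto
  then have abE: "{a, b} \<in> E" and axE: "{a, x} \<in> E"
    using ab ax by auto
  have "a \<prec> b" "a \<prec> x"
    using least ab ax N'(2) edge_vertices[OF abE] edge_vertices[OF axE] by blast+
  have "b \<in> \<Union>N'"
    using ab N'(2) by blast
  then obtain y where yb: "{b, y} \<in> N'"
    using \<open>N' \<subseteq> E\<close> edge_through by blast
  have "{a, x} \<noteq> {b, y}"
    using \<open>x \<noteq> b\<close> edge_vertices[OF abE] by (auto simp: doubleton_eq_iff)
  then have "{a, x} \<inter> {b, y} = {}"
    using matching_disjoint[OF N'(1) ax yb] by blast
  then have "y \<noteq> a" "y \<noteq> x" and byE: "{b, y} \<in> E"
    using yb \<open>N' \<subseteq> E\<close> by auto
  have "a \<prec> y" "y \<prec> b"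
    using least yb N'(2) \<open>y \<noteq> a\<close> edge_from_right_end[OF \<open>a \<prec> b\<close> abE byE] by blast+
  have "x \<in> \<Union>N"
    using ax N'(2) by blast
  then obtain z where xz: "{x, z} \<in> N"
    using \<open>N \<subseteq> E\<close> edge_through by blast
  have "{a, b} \<noteq> {x, z}"
    using \<open>x \<noteq> b\<close> edge_vertices[OF axE] by (auto simp: doubleton_eq_iff)
  then have "{a, b} \<inter> {x, z} = {}"
    using matching_disjoint[OF N(1) ab xz] by blast
  then have "z \<noteq> a" and xzE: "{x, z} \<in> E"
    using xz \<open>N \<subseteq> E\<close> by auto
  have "a \<prec> z" "z \<prec> x"
    using least xz \<open>z \<noteq> a\<close> edge_from_right_end[OF \<open>a \<prec> x\<close> axE xzE] by blast+
  have "x \<in> V" "y \<in> V"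
    using edge_vertices axE byE by auto
  then consider "y \<prec> x" | "x \<prec> y"
    using prec_linear \<open>y \<noteq> x\<close> by blast
  then show False
  proof cases
    case 1
    have yxE: "{y, x} \<in> E"
      using edge_split_right[OF \<open>a \<prec> y\<close> 1 axE \<open>y \<prec> b\<close>] byE by (simp add: insert_commute)
    \<comment> \<open>Trading \<open>ax\<close> and \<open>by\<close> for \<open>yx\<close> matches exactly the vertices of \<open>N\<close> other than \<open>a, b\<close>,
      so by induction \<open>yx \<in> N\<close>, where it crosses \<open>ab\<close>.\<close>
    define N'' where "N'' = N' - {{a, x}, {b, y}} \<union> {{y, x}}"
    have "matching E N''"
      unfolding N''_def
      by (rule matching_exchange[OF N'(1)]) (use ax yb yxE in \<open>auto intro: matchingI\<close>)
    moreover have "\<Union>N'' = \<Union>N - {a, b}"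
      using Union_diff_matching[OF N'(1), of "{{a, x}, {b, y}}"] ax yb N'(2) \<open>x \<noteq> b\<close> \<open>y \<noteq> a\<close>
        edge_vertices[OF axE] edge_vertices[OF byE]
      unfolding N''_def by auto
    ultimately have "N'' = N - {{a, b}}"
      by (rule smaller)
    then have "{y, x} \<in> N" "{a, b} \<noteq> {y, x}"
      unfolding N''_def by blast+
    then show False
      using cross_freeD[OF N(2) ab _ _ \<open>a \<prec> b\<close> 1 axE] byE by (simp add: insert_commute)
  next
    case 2
    have "{z, b} \<in> E"
      using edge_split_right[OF \<open>a \<prec> z\<close> _ abE \<open>z \<prec> x\<close>] prec_trans[OF \<open>z \<prec> x\<close> prec_trans[OF 2 \<open>y \<prec> b\<close>]]
        xzE by (simp add: insert_commute)
    moreover have "{a, b} \<noteq> {z, x}"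
      using \<open>{a, b} \<noteq> {x, z}\<close> by (simp add: insert_commute)
    ultimately show False
      using cross_freeD[OF N(2) ab _ _ \<open>a \<prec> b\<close> \<open>z \<prec> x\<close> axE] xz by (simp add: insert_commute)
  qed
qed

lemma cross_free_matching_unique:
  assumes "matching E N" "cross_free N" "matching E N'" "\<Union>N' = \<Union>N"
  shows "N' = N"
  using assms
proof (induction "card N" arbitrary: N N' rule: less_induct)
  case less
  have "N \<subseteq> E" "N' \<subseteq> E"
    using less.prems(1,3) matching_edges by auto
  show ?case
  proof (cases "N = {}")
    case True
    then show ?thesis
      using less.prems(4) \<open>N' \<subseteq> E\<close> edge_doubleton by fastforce
  next
    case False
    have "\<Union>N \<subseteq> V" "\<Union>N \<noteq> {}"
      using \<open>N \<subseteq> E\<close> False edge_doubleton by fastforce+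
    then obtain a where a: "a \<in> \<Union>N" and least: "\<And>s. s \<in> \<Union>N \<Longrightarrow> s \<noteq> a \<Longrightarrow> a \<prec> s"
      using least_vertex by blast
    obtain b where ab: "{a, b} \<in> N"
      using a \<open>N \<subseteq> E\<close> edge_through by blast
    have "a \<in> \<Union>N'"
      using a less.prems(4) by blast
    then obtain x where ax: "{a, x} \<in> N'"
      using \<open>N' \<subseteq> E\<close> edge_through by blast
    have smaller: "N'' = N - {{a, b}}" if "matching E N''" "\<Union>N'' = \<Union>N - {a, b}" for N''
    proof -
      have "card (N - {{a, b}}) < card N"
        using ab \<open>N \<subseteq> E\<close> finite_edges by (meson card_Diff1_less finite_subset)
      moreover have "matching E (N - {{a, b}})" "cross_free (N - {{a, b}})"
        using less.prems(1,2) matching_subset cross_free_subset by blast+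
      moreover have "\<Union>N'' = \<Union>(N - {{a, b}})"
        using that(2) Union_diff_matching[OF less.prems(1)] ab by auto
      ultimately show ?thesis
        using less.hyps that(1) by blast
    qed
    have "x = b"
      using least_vertex_same_partner[OF less.prems least ab ax smaller] .
    then have "N' - {{a, b}} = N - {{a, b}}"
      using smaller matching_subset[OF less.prems(3)] Union_diff_matching[OF less.prems(3)] ax
        less.prems(4) by auto
    then show ?thesis
      using ab ax \<open>x = b\<close> by blast
  qed
qed

lemma uniquely_restricted_iff_cross_free:
  "uniquely_restricted_matching E N \<longleftrightarrow> matching E N \<and> cross_free N"
  using uniquely_restricted_cross_free cross_free_matching_unique
  unfolding uniquely_restricted_matching_def by metis

context
  fixes a b c d :: 'a
  assumes first: "a \<prec> b" "{a, b} \<in> E" and second: "c \<prec> d" "{c, d} \<in> E" and "a \<prec> c"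
    and disjoint: "{a, b} \<inter> {c, d} = {}" and not_crossing: "\<not> ({a, d} \<in> E \<and> {c, b} \<in> E)"
begin

lemma overlapping_right_end:
  assumes "c \<prec> b"
  shows "{a, d} \<notin> E \<and> b \<prec> d"
proof -
  have "{c, b} \<in> E"
    using edge_split_right[OF \<open>a \<prec> c\<close> assms first(2) second] .
  then have "{a, d} \<notin> E"
    using not_crossing by blast
  moreover have "\<not> d \<prec> b"
    using edge_split_left[OF prec_trans[OF \<open>a \<prec> c\<close> second(1)] _ first(2) second] \<open>{a, d} \<notin> E\<close>
    by blast
  moreover have "b \<in> V" "d \<in> V" "b \<noteq> d"
    using edge_vertices first(2) second(2) disjoint by auto
  ultimately show ?thesis
    using prec_linear by blast
qed

lemma later_edge_disjoint:
  assumes "c \<prec> p" "p \<prec> q" "{p, q} \<in> E" "\<not> ({p, d} \<in> E \<and> {c, q} \<in> E)"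
  shows "{p, q} \<inter> {a, b} = {}"
proof -
  have "a \<prec> p" "a \<prec> q"
    using \<open>a \<prec> c\<close> assms(1,2) prec_trans by blast+
  have "b \<noteq> p"
  proof
    assume "b = p"
    then show False
      using no_increasing_path[OF first(1) _ first(2)] assms(2,3) by simp
  qed
  moreover have "b \<noteq> q"
  proof
    assume "b = q"
    then have "q \<prec> d"
      using overlapping_right_end prec_trans[OF assms(1,2)] by blast
    then show False
      using nested_edges_cross[OF assms(1,2) _ second(2) assms(3)] assms(4) by blast
  qed
  ultimately show ?thesis
    using \<open>a \<prec> p\<close> \<open>a \<prec> q\<close> prec_irrefl by auto
qed

lemma later_edge_not_crossing:
  assumes "c \<prec> p" "p \<prec> q" "{p, q} \<in> E" "q \<noteq> d" "\<not> ({p, d} \<in> E \<and> {c, q} \<in> E)"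
  shows "\<not> ({a, q} \<in> E \<and> {p, b} \<in> E)"
proof
  assume cross: "{a, q} \<in> E \<and> {p, b} \<in> E"
  then have "p \<prec> b"
    using edge_from_right_end[OF first] by (simp add: insert_commute)
  then have "{a, d} \<notin> E"
    using overlapping_right_end prec_trans[OF assms(1)] by blast
  have "q \<in> V" "d \<in> V"
    using edge_vertices assms(3) second(2) by auto
  then consider "d \<prec> q" | "q \<prec> d"
    using prec_linear assms(4) by blast
  then show False
  proof cases
    case 1
    then show False
      using edge_split_left[OF prec_trans[OF \<open>a \<prec> c\<close> second(1)] 1 _ second] cross \<open>{a, d} \<notin> E\<close>
      by blast
  next
    case 2
    then show False
      using nested_edges_cross[OF assms(1,2) 2 second(2) assms(3)] assms(5) by blast
  qed
qed

lemma edge_after_first_compatible: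
  assumes M: "matching E M" "cross_free M" "starts_with R M {c, d}" and pq: "{p, q} \<in> M" "p \<prec> q"
  shows "{p, q} \<inter> {a, b} = {} \<and> \<not> ({a, q} \<in> E \<and> {p, b} \<in> E)"
proof (cases "{p, q} = {c, d}")
  case True
  then have "p = c" "q = d"
    using oriented_doubleton_eq[OF _ pq(2) second(1)] by simp_all
  then show ?thesis
    using disjoint not_crossing by blast
next
  case False
  have "{c, d} \<in> M" "lft R {c, d} \<prec> lft R {p, q}"
    using starts_with_member[OF M(3)] starts_withD[OF M(3) pq(1) False] by simp_all
  then have "c \<prec> p"
    using second(1) lft_oriented pq(2) by simp
  have "{p, q} \<inter> {c, d} = {}"
    using matching_disjoint[OF M(1) pq(1) \<open>{c, d} \<in> M\<close> False] .
  then have "q \<noteq> d"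
    by blast
  have "\<not> ({p, d} \<in> E \<and> {c, q} \<in> E)"
    using cross_freeD[OF M(2) pq(1) \<open>{c, d} \<in> M\<close> False pq(2) second(1)] by blast
  moreover have "{p, q} \<in> E"
    using pq(1) matching_edges[OF M(1)] by blast
  ultimately show ?thesis
    using later_edge_disjoint[OF \<open>c \<prec> p\<close> pq(2)]
      later_edge_not_crossing[OF \<open>c \<prec> p\<close> pq(2)]
      \<open>q \<noteq> d\<close> by blast
qed

end

lemma uniquely_restricted_insert_first_edge:
  assumes M: "uniquely_restricted_matching E M" "starts_with R M e'"
    and e: "e \<in> E" "lft R e \<prec> lft R e'"
    and pair: "uniquely_restricted_matching E {e, e'}"
  shows "uniquely_restricted_matching E (insert e M) \<and> starts_with R (insert e M) e"
proof -
  have "matching E M" "cross_free M" "e' \<in> M"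
    using M uniquely_restricted_iff_cross_free starts_with_member by auto
  then have "M \<subseteq> E"
    using matching_edges by blast
  obtain a b where ab: "e = {a, b}" "a \<prec> b"
    using edge_oriented e(1) by blast
  obtain c d where cd: "e' = {c, d}" "c \<prec> d"
    using edge_oriented \<open>e' \<in> M\<close> \<open>M \<subseteq> E\<close> by blast
  have "a \<prec> c"
    using e(2) ab cd lft_oriented by simp
  then have "e \<noteq> e'"
    using ab cd oriented_doubleton_eq prec_irrefl by metis
  have "matching E {e, e'}" "cross_free {e, e'}"
    using pair uniquely_restricted_iff_cross_free by auto
  have pair_edges: "{a, b} \<in> {e, e'}" "{c, d} \<in> {e, e'}" "{a, b} \<noteq> {c, d}"
    using ab(1) cd(1) \<open>e \<noteq> e'\<close> by simp_all
  then have disjoint: "{a, b} \<inter> {c, d} = {}"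
    by (rule matching_disjoint[OF \<open>matching E {e, e'}\<close>])
  have not_crossing: "\<not> ({a, d} \<in> E \<and> {c, b} \<in> E)"
    using cross_freeD[OF \<open>cross_free {e, e'}\<close> pair_edges ab(2) cd(2)] by blast
  have "{a, b} \<in> E" "{c, d} \<in> E"
    using e(1) ab(1) \<open>e' \<in> M\<close> cd(1) \<open>M \<subseteq> E\<close> by auto
  note compatible = edge_after_first_compatible[OF ab(2) \<open>{a, b} \<in> E\<close> cd(2) \<open>{c, d} \<in> E\<close> \<open>a \<prec> c\<close>
      disjoint not_crossing \<open>matching E M\<close> \<open>cross_free M\<close> M(2)[unfolded cd(1)]]
  have "f \<inter> e = {}" if f: "f \<in> M" for f
  proof -
    obtain p q where "f = {p, q}" "p \<prec> q"
      using edge_oriented f \<open>M \<subseteq> E\<close> by blast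
    then show ?thesis
      using compatible f ab(1) by blast
  qed
  then have "matching E (insert e M)"
    by (rule matching_insert[OF \<open>matching E M\<close> e(1)])
  moreover have "cross_free (insert e M)"
    unfolding ab(1) by (rule cross_free_insert[OF \<open>cross_free M\<close> ab(2)]) (use compatible in blast)
  moreover have "trans R"
    using prec_trans by (blast intro: transI)
  ultimately show ?thesis
    by (simp add: uniquely_restricted_iff_cross_free starts_with_insert[OF _ M(2) e(2)])
qed

end

theorem corollary2:
  fixes V :: "'a set" and E :: "'a set set" and R :: "('a \<times> 'a) set"
    and M :: "'a set set" and e e' :: "'a set"
  assumes "simple_graph V E"
    and "bipartite_permutation_graph V E"
    and "transitive_vertex_ordering V E R"
    and "uniquely_restricted_matching E M"
    and "e' \<in> E"
    and "starts_with R M e'"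
    and "e \<in> E"
    and "(lft R e, lft R e') \<in> R"
    and "uniquely_restricted_matching E {e, e'}"
  shows "uniquely_restricted_matching E (insert e M) \<and> starts_with R (insert e M) e"
proof -
  interpret triangle_free_ordered_graph V E R
    using assms(1-3) bipartite_triangle_free[OF assms(1)]
    unfolding bipartite_permutation_graph_def by unfold_locales blast+
  show ?thesis
    using uniquely_restricted_insert_first_edge assms(4,6-9) by blast
qed

end
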